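(* The rational map $\mathbb{P}^2 \dashrightarrow \mathbb{P}^3$, $(r:s:t)\mapsto(w:x:y:z)$ with \begin{align*} w &= t^3-2t^2s-2tsr+ts^2+r^2s-r^3-rs^2,\\ x &= -t^3-2t^2s+ts^2-2tsr+2rs^2-s^3+r^3-2r^2s,\\ y &= 2t^3+3t^2r-2t^2s-2tsr+3tr^2+ts^2+2rs^2-s^3+r^3-2r^2s,\\ z &= -2t^3+t^2s-3t^2r-3tr^2+4tsr-2ts^2-r^3+r^2s-rs^2, \end{align*} defined over $\mathbb{Q}$, is a birational map from $\mathbb{P}^2$ onto the cubic surface $S_1: w^3 + x^3 = y^3 + z^3$. For this parametrization, $w^3+x^3$ factors over $\mathbb{Q}$ as a product of one linear, two quadratic and one quartic polynomial in $r,s,t$.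
   Context: No additional context. *)

theory Defs
  imports "HOL-Computational_Algebra.Polynomial_Factorial"
begin

text \<open>Polynomials in several variables over Q are represented as iterated univariate
polynomials.  Q[r,s,t] is rat poly poly poly, where r is the innermost variable and
t the outermost; Q[w,x,y,z] is rat poly poly poly poly, w innermost, z outermost.\<close>

type_synonym qpoly3 = "rat poly poly poly"
type_synonym qpoly4 = "rat poly poly poly poly"

definition coeff3 :: "'c::zero poly poly poly \<Rightarrow> nat \<Rightarrow> nat \<Rightarrow> nat \<Rightarrow> 'c" where
  "coeff3 p i j k = coeff (coeff (coeff p k) j) i"

definition coeff4 :: "'c::zero poly poly poly poly \<Rightarrow> nat \<Rightarrow> nat \<Rightarrow> nat \<Rightarrow> nat \<Rightarrow> 'c" where
  "coeff4 p i j k l = coeff (coeff (coeff (coeff p l) k) j) i"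

text \<open>Homogeneous of total degree d (the zero polynomial is homogeneous of every degree).\<close>
definition homog3 :: "'c::zero poly poly poly \<Rightarrow> nat \<Rightarrow> bool" where
  "homog3 p d \<longleftrightarrow> (\<forall>i j k. coeff3 p i j k \<noteq> 0 \<longrightarrow> i + j + k = d)"

definition homog4 :: "'c::zero poly poly poly poly \<Rightarrow> nat \<Rightarrow> bool" where
  "homog4 p d \<longleftrightarrow> (\<forall>i j k l. coeff4 p i j k l \<noteq> 0 \<longrightarrow> i + j + k + l = d)"

definition ev3 :: "('c::zero \<Rightarrow> 'a::comm_semiring_1) \<Rightarrow> 'c poly poly poly \<Rightarrow> 'a \<Rightarrow> 'a \<Rightarrow> 'a \<Rightarrow> 'a" where
  "ev3 \<phi> p r s t =
     poly (map_poly (\<lambda>q. poly (map_poly (\<lambda>u. poly (map_poly \<phi> u) r) q) s) p) t"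

definition ev4 :: "('c::zero \<Rightarrow> 'a::comm_semiring_1) \<Rightarrow> 'c poly poly poly poly
                    \<Rightarrow> 'a \<Rightarrow> 'a \<Rightarrow> 'a \<Rightarrow> 'a \<Rightarrow> 'a" where
  "ev4 \<phi> p w x y z =
     poly (map_poly (\<lambda>q. poly (map_poly (\<lambda>u. poly (map_poly (\<lambda>v. poly (map_poly \<phi> v) w) u) x) q) y) p) z"

definition c3 :: "rat \<Rightarrow> qpoly3" where "c3 a = [:[:[:a:]:]:]"
definition c4 :: "rat \<Rightarrow> qpoly4" where "c4 a = [:[:[:[:a:]:]:]:]"

definition R :: qpoly3 where "R = [:[:[:0, 1:]:]:]"
definition S :: qpoly3 where "S = [:[:0, 1:]:]"
definition T :: qpoly3 where "T = [:0, 1:]"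

definition Wv :: qpoly4 where "Wv = [:[:[:[:0, 1:]:]:]:]"
definition Xv :: qpoly4 where "Xv = [:[:[:0, 1:]:]:]"
definition Yv :: qpoly4 where "Yv = [:[:0, 1:]:]"
definition Zv :: qpoly4 where "Zv = [:0, 1:]"

text \<open>A rational map P^2 --> P^3 over Q given by forms F0..F3 (homogeneous of a common
degree, not all zero) is birational onto the hypersurface V(Phi) in P^3 if its image lies
in V(Phi) and it has a rational inverse V(Phi) --> P^2, i.e. forms G0,G1,G2 of a common
degree, not all vanishing on V(Phi), with G o F = id on P^2 and F o G = id on V(Phi)
(as rational maps, i.e. up to a common nonzero scalar factor, and on V(Phi) modulo
the ideal (Phi)).\<close>
definition birational_onto_hypersurface ::
  "qpoly3 \<Rightarrow> qpoly3 \<Rightarrow> qpoly3 \<Rightarrow> qpoly3 \<Rightarrow> qpoly4 \<Rightarrow> bool" where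
  "birational_onto_hypersurface F0 F1 F2 F3 \<Phi> \<longleftrightarrow>
     (\<exists>d. homog3 F0 d \<and> homog3 F1 d \<and> homog3 F2 d \<and> homog3 F3 d) \<and>
     (F0 \<noteq> 0 \<or> F1 \<noteq> 0 \<or> F2 \<noteq> 0 \<or> F3 \<noteq> 0) \<and>
     ev4 c3 \<Phi> F0 F1 F2 F3 = 0 \<and>
     (\<exists>G0 G1 G2 :: qpoly4.
        (\<exists>e. homog4 G0 e \<and> homog4 G1 e \<and> homog4 G2 e) \<and>
        \<not> (\<Phi> dvd G0 \<and> \<Phi> dvd G1 \<and> \<Phi> dvd G2) \<and>
        (\<exists>h::qpoly3. h \<noteq> 0 \<and>
            ev4 c3 G0 F0 F1 F2 F3 = h * R \<and>
            ev4 c3 G1 F0 F1 F2 F3 = h * S \<and>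
            ev4 c3 G2 F0 F1 F2 F3 = h * T) \<and>
        (\<exists>k::qpoly4. \<not> \<Phi> dvd k \<and>
            \<Phi> dvd (ev3 c4 F0 G0 G1 G2 - k * Wv) \<and>
            \<Phi> dvd (ev3 c4 F1 G0 G1 G2 - k * Xv) \<and>
            \<Phi> dvd (ev3 c4 F2 G0 G1 G2 - k * Yv) \<and>
            \<Phi> dvd (ev3 c4 F3 G0 G1 G2 - k * Zv)))"

definition pw :: qpoly3 where
  "pw = T^3 - 2*T^2*S - 2*T*S*R + T*S^2 + R^2*S - R^3 - R*S^2"
definition px :: qpoly3 where
  "px = - (T^3) - 2*T^2*S + T*S^2 - 2*T*S*R + 2*R*S^2 - S^3 + R^3 - 2*R^2*S"
definition py :: qpoly3 where
  "py = 2*T^3 + 3*T^2*R - 2*T^2*S - 2*T*S*R + 3*T*R^2 + T*S^2 + 2*R*S^2 - S^3 + R^3 - 2*R^2*S"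
definition pz :: qpoly3 where
  "pz = - (2*T^3) + T^2*S - 3*T^2*R - 3*T*R^2 + 4*T*S*R - 2*T*S^2 - R^3 + R^2*S - R*S^2"

definition S1 :: qpoly4 where
  "S1 = Wv^3 + Xv^3 - Yv^3 - Zv^3"

end

theory Submission
  imports Defs
begin

text \<open>
  All claims except irreducibility are polynomial identities, verified by ring normalisation:
  the parametrization lands on \<open>S1\<close>, the quadrics \<open>(inv_r : inv_s : inv_t)\<close> invert it
  up to scalar factors (on \<open>S1\<close> modulo its equation), and \<open>w^3 + x^3\<close> factors as stated.

  Each nonlinear factor has a constant leading coefficient in \<open>t\<close>, so a factorization would
  survive the specialisation \<open>r = 1, s = 2\<close>.  There the factors become \<open>4t^2 + 3\<close>,
  \<open>t^2 + 3\<close> and \<open>3t^4 + 7t^2 + 3\<close>, which are irreducible over \<open>\<rat>\<close>: they have no real root,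
  and a splitting of the quartic into two quadratics would force \<open>\<surd>13 \<in> \<rat>\<close>.
\<close>

section \<open>Ring homomorphisms and evaluation\<close>

locale comm_ring_hom =
  fixes hom :: "'a::comm_ring_1 \<Rightarrow> 'b::comm_ring_1"
  assumes hom_add: "hom (x + y) = hom x + hom y"
    and hom_mult: "hom (x * y) = hom x * hom y"
    and hom_one: "hom 1 = 1"
begin

lemma hom_zero: "hom 0 = 0"
  using hom_add[of 0 0] by simp

lemma hom_uminus: "hom (- x) = - hom x"
  using hom_add[of x "- x"] by (simp add: hom_zero add_eq_0_iff)

lemma hom_diff: "hom (x - y) = hom x - hom y"
  using hom_add[of x "- y"] by (simp add: hom_uminus)

lemma hom_power: "hom (x ^ n) = hom x ^ n"
  by (induction n) (simp_all add: hom_one hom_mult)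

lemma hom_of_nat: "hom (of_nat n) = of_nat n"
  by (induction n) (simp_all add: hom_zero hom_one hom_add)

lemma hom_numeral: "hom (numeral n) = numeral n"
  using hom_of_nat[of "numeral n"] by simp

lemma hom_dvd_1: "x dvd 1 \<Longrightarrow> hom x dvd 1"
  by (metis dvdE dvdI hom_mult hom_one)

lemmas hom_arith = hom_add hom_mult hom_diff hom_uminus hom_power hom_numeral

end

lemma comm_ring_hom_id: "comm_ring_hom (\<lambda>x. x)"
  by unfold_locales simp_all

lemma comm_ring_hom_map_poly:
  assumes "comm_ring_hom f"
  shows "comm_ring_hom (map_poly f)"
proof -
  interpret f: comm_ring_hom f by fact
  have add: "map_poly f (p + q) = map_poly f p + map_poly f q" for p q
    by (intro poly_eqI) (simp add: coeff_map_poly f.hom_zero f.hom_add)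
  have "map_poly f (p * q) = map_poly f p * map_poly f q" for p q
  proof (induction p rule: pCons_induct)
    case (pCons a p)
    have "map_poly f (pCons a p * q) = map_poly f (smult a q + pCons 0 (p * q))"
      by simp
    also have "\<dots> = smult (f a) (map_poly f q) + pCons 0 (map_poly f p * map_poly f q)"
      using pCons.IH by (simp add: add map_poly_smult map_poly_pCons f.hom_zero f.hom_mult)
    also have "\<dots> = map_poly f (pCons a p) * map_poly f q"
      by (simp add: map_poly_pCons f.hom_zero)
    finally show ?case .
  qed simp
  with add show ?thesis
    by unfold_locales (simp_all add: f.hom_one)
qed

lemma comm_ring_hom_poly: "comm_ring_hom (\<lambda>p. poly p a)"
  by unfold_locales simp_all

lemma comm_ring_hom_comp:
  "comm_ring_hom f \<Longrightarrow> comm_ring_hom g \<Longrightarrow> comm_ring_hom (\<lambda>x. g (f x))"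
  by (simp add: comm_ring_hom_def)

lemma comm_ring_hom_poly_map_poly:
  "comm_ring_hom f \<Longrightarrow> comm_ring_hom (\<lambda>p. poly (map_poly f p) a)"
  by (intro comm_ring_hom_comp[OF comm_ring_hom_map_poly comm_ring_hom_poly])

lemma comm_ring_hom_ev3: "comm_ring_hom \<phi> \<Longrightarrow> comm_ring_hom (\<lambda>p. ev3 \<phi> p r s t)"
  unfolding ev3_def by (intro comm_ring_hom_poly_map_poly)

lemma comm_ring_hom_ev4: "comm_ring_hom \<phi> \<Longrightarrow> comm_ring_hom (\<lambda>p. ev4 \<phi> p w x y z)"
  unfolding ev4_def by (intro comm_ring_hom_poly_map_poly)

lemma comm_ring_hom_c3: "comm_ring_hom c3"
  by unfold_locales (simp_all add: c3_def one_pCons)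

lemma comm_ring_hom_c4: "comm_ring_hom c4"
  by unfold_locales (simp_all add: c4_def one_pCons)

context
  fixes \<phi> :: "rat \<Rightarrow> 'a::comm_ring_1" assumes \<phi>: "comm_ring_hom \<phi>"
begin

interpretation \<phi>: comm_ring_hom \<phi> by (fact \<phi>)

lemma ev3_variables: "ev3 \<phi> R r s t = r" "ev3 \<phi> S r s t = s" "ev3 \<phi> T r s t = t"
  by (simp_all add: ev3_def R_def S_def T_def map_poly_pCons \<phi>.hom_zero \<phi>.hom_one)

lemma ev4_variables:
  "ev4 \<phi> Wv w x y z = w" "ev4 \<phi> Xv w x y z = x" "ev4 \<phi> Yv w x y z = y" "ev4 \<phi> Zv w x y z = z"
  by (simp_all add: ev4_def Wv_def Xv_def Yv_def Zv_def map_poly_pCons \<phi>.hom_zero \<phi>.hom_one)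

lemmas ev3_simps = comm_ring_hom.hom_arith[OF comm_ring_hom_ev3[OF \<phi>]] ev3_variables
lemmas ev4_simps = comm_ring_hom.hom_arith[OF comm_ring_hom_ev4[OF \<phi>]] ev4_variables

end

section \<open>Gradings and homogeneity\<close>

locale grading =
  fixes homog :: "'a::comm_ring_1 \<Rightarrow> nat \<Rightarrow> bool"
  assumes homog_zero: "homog 0 d"
    and homog_one: "homog 1 0"
    and homog_add: "homog a d \<Longrightarrow> homog b d \<Longrightarrow> homog (a + b) d"
    and homog_uminus: "homog a d \<Longrightarrow> homog (- a) d"
    and homog_mult: "homog a d \<Longrightarrow> homog b e \<Longrightarrow> homog (a * b) (d + e)"
begin

lemma homog_diff: "homog a d \<Longrightarrow> homog b d \<Longrightarrow> homog (a - b) d"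
  using homog_add[of a d "- b"] homog_uminus[of b d] by simp

lemma homog_sum: "(\<And>i. i \<in> A \<Longrightarrow> homog (f i) d) \<Longrightarrow> homog (sum f A) d"
  by (induction A rule: infinite_finite_induct) (simp_all add: homog_zero homog_add)

lemma homog_multI: "homog a d \<Longrightarrow> homog b e \<Longrightarrow> d + e = n \<Longrightarrow> homog (a * b) n"
  using homog_mult by blast

lemma homog_powerI: "homog a d \<Longrightarrow> n * d = m \<Longrightarrow> homog (a ^ n) m"
  by (induction n arbitrary: m) (auto simp: homog_one intro: homog_multI)

lemma homog_of_nat: "homog (of_nat n) 0"
  by (induction n) (simp_all add: homog_zero homog_add[OF homog_one])

lemma homog_numeral: "homog (numeral n) 0"
  using homog_of_nat[of "numeral n"] by simp

lemmas homog_intros =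
  homog_add homog_diff homog_uminus homog_multI homog_powerI homog_numeral

end

definition homog_const :: "'a::zero \<Rightarrow> nat \<Rightarrow> bool" where
  "homog_const c d \<longleftrightarrow> (c \<noteq> 0 \<longrightarrow> d = 0)"

lemma grading_homog_const: "grading homog_const"
  by unfold_locales (auto simp: homog_const_def)

definition homog_poly :: "('a::zero \<Rightarrow> nat \<Rightarrow> bool) \<Rightarrow> 'a poly \<Rightarrow> nat \<Rightarrow> bool" where
  "homog_poly H p d \<longleftrightarrow> (\<forall>k. coeff p k \<noteq> 0 \<longrightarrow> k \<le> d \<and> H (coeff p k) (d - k))"

lemma homog_polyD:
  "homog_poly H p d \<Longrightarrow> coeff p k \<noteq> 0 \<Longrightarrow> k \<le> d \<and> H (coeff p k) (d - k)"
  by (simp add: homog_poly_def)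

lemma homog_poly_const: "H c d \<Longrightarrow> homog_poly H [:c:] d"
  by (auto simp: homog_poly_def coeff_pCons split: nat.splits)

context grading
begin

lemma homog_poly_coeff: "homog_poly homog p d \<Longrightarrow> homog (coeff p k) (d - k)"
  by (cases "coeff p k = 0") (auto simp: homog_poly_def homog_zero)

lemma homog_poly_X: "homog_poly homog [:0, 1:] 1"
  by (auto simp: homog_poly_def coeff_pCons homog_one split: nat.splits)

lemma homog_poly_add:
  assumes "homog_poly homog p d" "homog_poly homog q d"
  shows "homog_poly homog (p + q) d"
  unfolding homog_poly_def
proof (intro allI impI conjI)
  fix k assume "coeff (p + q) k \<noteq> 0"
  then have "coeff p k \<noteq> 0 \<or> coeff q k \<noteq> 0" by auto
  then show "k \<le> d" using assms by (auto dest: homog_polyD)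
  show "homog (coeff (p + q) k) (d - k)"
    using assms by (simp add: homog_add homog_poly_coeff)
qed

lemma homog_poly_mult:
  assumes p: "homog_poly homog p d" and q: "homog_poly homog q e"
  shows "homog_poly homog (p * q) (d + e)"
  unfolding homog_poly_def
proof (intro allI impI conjI)
  fix n assume "coeff (p * q) n \<noteq> 0"
  then obtain i where "i \<le> n" "coeff p i \<noteq> 0" "coeff q (n - i) \<noteq> 0"
    by (metis (no_types, lifting) atMost_iff coeff_mult mult_not_zero sum.neutral)
  then show "n \<le> d + e"
    using p q by (auto dest!: homog_polyD)
  have "homog (coeff p i * coeff q (n - i)) (d + e - n)" if "i \<le> n" for i
  proof (cases "coeff p i = 0 \<or> coeff q (n - i) = 0")
    case False
    then have "i \<le> d" "n - i \<le> e"
      using p q by (auto dest: homog_polyD)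
    then have "d + e - n = (d - i) + (e - (n - i))"
      using \<open>i \<le> n\<close> by linarith
    then show ?thesis
      using p q by (simp add: homog_mult homog_poly_coeff)
  qed (auto simp: homog_zero)
  then show "homog (coeff (p * q) n) (d + e - n)"
    unfolding coeff_mult by (rule homog_sum) simp
qed

lemma grading_homog_poly: "grading (homog_poly homog)"
proof
  show "homog_poly homog 1 0"
    by (simp add: homog_poly_def homog_one)
  show "homog_poly homog 0 d" for d
    by (simp add: homog_poly_def)
  show "homog_poly homog (- p) d" if "homog_poly homog p d" for p d
    using that by (simp add: homog_poly_def homog_uminus)
qed (simp_all add: homog_poly_add homog_poly_mult)

end

abbreviation homog_poly3 :: "'a::comm_ring_1 poly poly poly \<Rightarrow> nat \<Rightarrow> bool" where
  "homog_poly3 \<equiv> homog_poly (homog_poly (homog_poly homog_const))"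

abbreviation homog_poly4 :: "'a::comm_ring_1 poly poly poly poly \<Rightarrow> nat \<Rightarrow> bool" where
  "homog_poly4 \<equiv> homog_poly homog_poly3"

lemma grading_homog_poly3: "grading homog_poly3"
  by (intro grading.grading_homog_poly grading_homog_const)

lemma grading_homog_poly4: "grading homog_poly4"
  by (intro grading.grading_homog_poly grading_homog_poly3)

lemma homog_poly3_imp_homog3:
  assumes "homog_poly3 p d"
  shows "homog3 p d"
  unfolding homog3_def coeff3_def
proof (intro allI impI)
  fix i j k assume nz: "coeff (coeff (coeff p k) j) i \<noteq> 0"
  then have "coeff p k \<noteq> 0" "coeff (coeff p k) j \<noteq> 0" by auto
  with assms have "k \<le> d" "j \<le> d - k"
    and "homog_poly homog_const (coeff (coeff p k) j) (d - k - j)"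
    by (blast dest: homog_polyD)+
  moreover from this(3) nz have "i \<le> d - k - j" "d - k - j - i = 0"
    by (auto simp: homog_const_def dest: homog_polyD)
  ultimately show "i + j + k = d" by linarith
qed

lemma homog_poly4_imp_homog4:
  assumes "homog_poly4 p d"
  shows "homog4 p d"
  unfolding homog4_def
proof (intro allI impI)
  fix i j k l assume nz: "coeff4 p i j k l \<noteq> 0"
  then have "coeff p l \<noteq> 0" by (auto simp: coeff4_def)
  with assms have "l \<le> d" "homog_poly3 (coeff p l) (d - l)"
    by (blast dest: homog_polyD)+
  moreover from this(2) nz have "i + j + k = d - l"
    using homog_poly3_imp_homog3 by (fastforce simp: homog3_def coeff3_def coeff4_def)
  ultimately show "i + j + k + l = d" by linarith
qed

interpretation homog3: grading "homog_poly3 :: qpoly3 \<Rightarrow> nat \<Rightarrow> bool"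
  by (fact grading_homog_poly3)

interpretation homog4: grading "homog_poly4 :: qpoly4 \<Rightarrow> nat \<Rightarrow> bool"
  by (fact grading_homog_poly4)

lemma homog_poly3_variables: "homog_poly3 R 1" "homog_poly3 S 1" "homog_poly3 T 1"
  unfolding R_def S_def T_def
  by (intro homog_poly_const grading.homog_poly_X grading_homog_const
      grading_homog_poly3 grading.grading_homog_poly)+

lemma homog_poly4_variables:
  "homog_poly4 Wv 1" "homog_poly4 Xv 1" "homog_poly4 Yv 1" "homog_poly4 Zv 1"
  unfolding Wv_def Xv_def Yv_def Zv_def
  by (intro homog_poly_const grading.homog_poly_X grading_homog_const
      grading_homog_poly3 grading_homog_poly4 grading.grading_homog_poly)+

section \<open>Irreducibility criteria\<close>

lemma irreducible_field_polyI:
  fixes p :: "'a::field poly"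
  assumes "degree p \<noteq> 0"
    and "\<And>a b. p = a * b \<Longrightarrow> degree a = 0 \<or> degree b = 0"
  shows "irreducible p"
proof (rule irreducibleI)
  show "p \<noteq> 0"
    using assms(1) by auto
  then show "\<not> is_unit p"
    using assms(1) by (simp add: is_unit_iff_degree)
  fix a b assume "p = a * b"
  with \<open>p \<noteq> 0\<close> assms(2) show "is_unit a \<or> is_unit b"
    by (metis is_unit_iff_degree mult_zero_left mult_zero_right)
qed

lemma irreducible_if_irreducible_map_poly:
  fixes P :: "'a::{idom_divide, algebraic_semidom} poly" and \<phi> :: "'a \<Rightarrow> 'b::field"
  assumes \<phi>: "comm_ring_hom \<phi>" and lc: "is_unit (lead_coeff P)"
    and irr: "irreducible (map_poly \<phi> P)"
  shows "irreducible P"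
proof (rule irreducibleI)
  interpret \<phi>: comm_ring_hom \<phi> by fact
  interpret map_\<phi>: comm_ring_hom "map_poly \<phi>" by (rule comm_ring_hom_map_poly[OF \<phi>])
  have unit_iff_unit_map: "is_unit Q \<longleftrightarrow> is_unit (map_poly \<phi> Q)"
    if "is_unit (lead_coeff Q)" for Q
  proof
    assume "is_unit (map_poly \<phi> Q)"
    moreover have "\<phi> (lead_coeff Q) \<noteq> 0"
      using \<phi>.hom_dvd_1[OF that] by auto
    ultimately have "degree Q = 0"
      by (metis is_unit_iff_degree map_poly_degree_eq not_is_unit_0)
    with that show "is_unit Q"
      by (metis degree_0_id is_unit_const_poly_iff)
  qed (rule map_\<phi>.hom_dvd_1)
  show "P \<noteq> 0"
    using lc by auto
  show "\<not> is_unit P"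
    using irr lc unit_iff_unit_map irreducible_not_unit by blast
  fix a b assume P: "P = a * b"
  then have "is_unit (lead_coeff a)" "is_unit (lead_coeff b)"
    using lc by (simp_all add: lead_coeff_mult is_unit_mult_iff)
  moreover have "map_poly \<phi> P = map_poly \<phi> a * map_poly \<phi> b"
    using P by (simp add: map_\<phi>.hom_mult)
  then have "is_unit (map_poly \<phi> a) \<or> is_unit (map_poly \<phi> b)"
    using irr by (simp add: irreducibleD)
  ultimately show "is_unit a \<or> is_unit b"
    using unit_iff_unit_map by blast
qed

lemma no_linear_factor_if_no_root:
  fixes p c :: "'a::field poly"
  assumes "\<And>x. poly p x \<noteq> 0" and "c dvd p"
  shows "degree c \<noteq> 1"
proof
  assume "degree c = 1"
  then obtain a b where c: "c = [:b, a:]" "a \<noteq> 0"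
    by (rule degree1_coeffs)
  then have "poly c (- b / a) = 0"
    by simp
  with assms show False
    by auto
qed

lemma irreducible_if_no_root:
  fixes p :: "'a::field poly"
  assumes "degree p \<in> {2, 3}" and "\<And>x. poly p x \<noteq> 0"
  shows "irreducible p"
proof (rule irreducible_field_polyI)
  show "degree p \<noteq> 0"
    using assms(1) by auto
  fix a b assume p: "p = a * b"
  then have "a \<noteq> 0" "b \<noteq> 0"
    using \<open>degree p \<noteq> 0\<close> by auto
  with p have "degree a + degree b \<in> {2, 3}"
    using assms(1) by (simp add: degree_mult_eq)
  moreover have "degree a \<noteq> 1" "degree b \<noteq> 1"
    using p no_linear_factor_if_no_root[OF assms(2)] by simp_all
  ultimately show "degree a = 0 \<or> degree b = 0"
    by auto
qed

lemma poly_even_quadratic_ne_0: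
  fixes a c x :: "'a::linordered_field"
  assumes "0 < a" "0 \<le> c"
  shows "poly [:a, 0, c:] x \<noteq> 0"
proof -
  have "poly [:a, 0, c:] x = a + c * x ^ 2"
    by (simp add: power2_eq_square algebra_simps)
  moreover have "0 \<le> c * x ^ 2"
    using assms(2) by simp
  ultimately show ?thesis
    using assms(1) by linarith
qed

lemma rat_square_eq_int_imp_Ints:
  fixes x :: rat
  assumes "x ^ 2 = of_int n"
  shows "x \<in> \<int>"
proof -
  obtain a b where q: "quotient_of x = (a, b)"
    by (cases "quotient_of x")
  have "b > 0" "coprime a b" and x: "x = of_int a / of_int b"
    using q quotient_of_denom_pos quotient_of_coprime quotient_of_div by blast+
  have "of_int a = x * of_int b"
    using x \<open>b > 0\<close> by simp
  then have "of_int (a ^ 2) = (of_int (n * b ^ 2) :: rat)"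
    using assms by (simp add: power_mult_distrib)
  then have "b ^ 2 dvd a ^ 2"
    unfolding of_int_eq_iff by simp
  moreover have "coprime (b ^ 2) (a ^ 2)"
    using \<open>coprime a b\<close> by (simp add: coprime_commute)
  ultimately have "is_unit (b ^ 2)"
    using coprime_absorb_left by blast
  then have "is_unit b"
    by (metis is_unit_power_iff zero_neq_numeral)
  with \<open>b > 0\<close> have "b = 1"
    by simp
  then show ?thesis
    using x by simp
qed

lemma rat_square_ne_13: "(x :: rat) ^ 2 \<noteq> 13"
proof
  assume x: "x ^ 2 = 13"
  then obtain m where "x = of_int m"
    using rat_square_eq_int_imp_Ints[of x 13] by (auto elim: Ints_cases)
  with x have m: "m ^ 2 = 13"
    by (metis of_int_eq_iff of_int_numeral of_int_power)
  show False
  proof (cases "\<bar>m\<bar> \<le> 3")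
    case True
    then have "\<bar>m\<bar> ^ 2 \<le> 3 ^ 2"
      by (intro power_mono) simp_all
    with m show False
      by simp
  next
    case False
    then have "4 ^ 2 \<le> \<bar>m\<bar> ^ 2"
      by (intro power_mono) simp_all
    with m show False
      by simp
  qed
qed

text \<open>With \<open>u = a0 b2\<close> and \<open>v = a2 b0\<close> we have \<open>u v = 9\<close>.  If \<open>a1 = 0\<close>, then \<open>u + v = 7\<close>, so
  \<open>(2u - 7)^2 = 13\<close>.  Otherwise \<open>u = v = \<plusminus>3\<close>, while \<open>3 a1 b1 = -(a1 b0)^2 < 0\<close> forces
  \<open>2u = 7 - a1 b1 > 7\<close>.\<close>

lemma quartic_3_7_3_ne_product_of_quadratics:
  "[:a0, a1, a2:] * [:b0, b1, b2:] \<noteq> [:3, 0, 7, 0, 3 :: rat:]"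
proof
  assume "[:a0, a1, a2:] * [:b0, b1, b2:] = [:3, 0, 7, 0, 3 :: rat:]"
  then have e0: "a0 * b0 = 3" and e1: "a0 * b1 + a1 * b0 = 0"
    and e2: "a0 * b2 + a1 * b1 + a2 * b0 = 7" and e3: "a1 * b2 + a2 * b1 = 0"
    and e4: "a2 * b2 = 3"
    by (simp_all add: algebra_simps)
  have "(a0 * b2) * (a2 * b0) = (a0 * b0) * (a2 * b2)"
    by (simp only: ac_simps)
  with e0 e4 have uv: "(a0 * b2) * (a2 * b0) = 9"
    by simp
  show False
  proof (cases "a1 = 0")
    case True
    with e0 e1 have "b1 = 0"
      by auto
    with True e2 have "a2 * b0 = 7 - a0 * b2"
      by simp
    with uv have "(2 * (a0 * b2) - 7) ^ 2 = 13"
      by (simp add: power2_eq_square algebra_simps)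
    then show False
      using rat_square_ne_13 by blast
  next
    case False
    have "a1 * (a2 * b0 - a0 * b2) = a2 * (a0 * b1 + a1 * b0) - a0 * (a1 * b2 + a2 * b1)"
      by (simp add: algebra_simps)
    with False e1 e3 have "a2 * b0 = a0 * b2"
      by simp
    with uv have u: "(a0 * b2) ^ 2 = 9"
      by (simp add: power2_eq_square)
    have "3 * (a1 * b1) = (a0 * b1 + a1 * b0) * (a1 * b0) - (a1 * b0) ^ 2"
      using e0 by (simp add: power2_eq_square algebra_simps flip: e0)
    with e1 have "3 * (a1 * b1) = - ((a1 * b0) ^ 2)"
      by simp
    moreover have "0 < (a1 * b0) ^ 2"
      using False e0 by auto
    ultimately have "a1 * b1 < 0"
      by linarith
    with e2 \<open>a2 * b0 = a0 * b2\<close> have "7 / 2 < a0 * b2"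
      by linarith
    moreover have "(a0 * b2 - 3) * (a0 * b2 + 3) = 0"
      using u by (simp add: power2_eq_square algebra_simps)
    ultimately show False
      by auto
  qed
qed

lemma irreducible_quartic_3_7_3: "irreducible [:3, 0, 7, 0, 3 :: rat:]"
proof (rule irreducible_field_polyI)
  fix a b assume p: "[:3, 0, 7, 0, 3 :: rat:] = a * b"
  have no_root: "poly [:3, 0, 7, 0, 3 :: rat:] x \<noteq> 0" for x
  proof -
    have "poly [:3, 0, 7, 0, 3:] x = 3 + 7 * x ^ 2 + 3 * (x ^ 2) ^ 2"
      by (simp add: power2_eq_square algebra_simps)
    moreover have "0 \<le> x ^ 2" "0 \<le> (x ^ 2) ^ 2"
      by simp_all
    ultimately show ?thesis
      by linarith
  qed
  from p have "a \<noteq> 0" "b \<noteq> 0"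
    by auto
  then have "degree a + degree b = 4"
    using degree_mult_eq[of a b] by (simp flip: p)
  moreover have "degree a \<noteq> 1" "degree b \<noteq> 1"
    using p no_linear_factor_if_no_root[OF no_root] by simp_all
  ultimately consider "degree a = 0 \<or> degree b = 0" | "degree a = 2" "degree b = 2"
    by linarith
  then show "degree a = 0 \<or> degree b = 0"
  proof cases
    case 2
    obtain a0 a1 a2 b0 b1 b2 where "a = [:a0, a1, a2:]" "b = [:b0, b1, b2:]"
      using degree2_coeffs[OF 2(1)] degree2_coeffs[OF 2(2)] by metis
    with p quartic_3_7_3_ne_product_of_quadratics show ?thesis
      by metis
  qed
qed simp

section \<open>The factorization of \<open>w^3 + x^3\<close>\<close>

definition quad1 :: qpoly3 where
  "quad1 = 4*T^2 - 2*T*S + 4*T*R + S^2 - S*R + R^2"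

definition quad2 :: qpoly3 where
  "quad2 = T^2 + T*S - 2*T*R + S^2 - S*R + R^2"

definition quartic :: qpoly3 where
  "quartic = 3*T^4 - 3*T^3*S + 6*T^3*R + 4*T^2*S^2 - 9*T^2*S*R + 9*T^2*R^2 - 2*T*S^3 +
     7*T*S^2*R - 9*T*S*R^2 + 6*T*R^3 + S^4 - 4*S^3*R + 7*S^2*R^2 - 6*S*R^3 + 3*R^4"

lemma pw_cube_plus_px_cube_factorization: "pw ^ 3 + px ^ 3 = (- S) * quad1 * quad2 * quartic"
  unfolding pw_def px_def quad1_def quad2_def quartic_def by algebra

lemma factors_as_polys_in_t:
  "quad1 = [:[:[:0, 0, 1:], [:0, - 1:], [:1:]:], [:[:0, 4:], [:- 2:]:], [:[:4:]:]:]"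
  "quad2 = [:[:[:0, 0, 1:], [:0, - 1:], [:1:]:], [:[:0, - 2:], [:1:]:], [:[:1:]:]:]"
  "quartic = [:[:[:0, 0, 0, 0, 3:], [:0, 0, 0, - 6:], [:0, 0, 7:], [:0, - 4:], [:1:]:],
     [:[:0, 0, 0, 6:], [:0, 0, - 9:], [:0, 7:], [:- 2:]:], [:[:0, 0, 9:], [:0, - 9:], [:4:]:],
     [:[:0, 6:], [:- 3:]:], [:[:3:]:]:]"
  by (simp_all add: quad1_def quad2_def quartic_def R_def S_def T_def power2_eq_square
      power3_eq_cube power4_eq_xxxx numeral_poly algebra_simps one_pCons)

definition eval_r1_s2 :: "rat poly poly \<Rightarrow> rat" where
  "eval_r1_s2 c = poly (map_poly (\<lambda>u. poly u 1) c) 2"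

lemma comm_ring_hom_eval_r1_s2: "comm_ring_hom eval_r1_s2"
  unfolding eval_r1_s2_def by (intro comm_ring_hom_poly_map_poly comm_ring_hom_poly)

lemma factors_at_r1_s2:
  "map_poly eval_r1_s2 quad1 = [:3, 0, 4:]"
  "map_poly eval_r1_s2 quad2 = [:3, 0, 1:]"
  "map_poly eval_r1_s2 quartic = [:3, 0, 7, 0, 3:]"
  by (simp_all add: factors_as_polys_in_t eval_r1_s2_def map_poly_pCons)

lemma irreducible_factors:
  "irreducible (- S)" "irreducible quad1" "irreducible quad2" "irreducible quartic"
proof -
  have "- S = [:[:0, - 1:]:]"
    by (simp add: S_def)
  moreover have "irreducible ([:0, - 1:] :: rat poly poly)"
    by (rule irreducible_if_irreducible_map_poly[OF comm_ring_hom_poly[of 0]])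
      (simp_all add: map_poly_pCons irreducible_linear_field_poly)
  ultimately show "irreducible (- S)"
    by (simp add: irreducible_const_poly_iff)
  have unit_lead: "is_unit (lead_coeff quad1)" "is_unit (lead_coeff quad2)"
      "is_unit (lead_coeff quartic)"
    by (simp_all add: factors_as_polys_in_t is_unit_const_poly_iff one_pCons dvd_field_iff)
  have "irreducible (map_poly eval_r1_s2 quad1)" "irreducible (map_poly eval_r1_s2 quad2)"
    unfolding factors_at_r1_s2 by (intro irreducible_if_no_root poly_even_quadratic_ne_0; simp)+
  moreover have "irreducible (map_poly eval_r1_s2 quartic)"
    unfolding factors_at_r1_s2 by (rule irreducible_quartic_3_7_3)
  ultimately show "irreducible quad1" "irreducible quad2" "irreducible quartic"
    using unit_lead by (auto intro: irreducible_if_irreducible_map_poly[OF comm_ring_hom_eval_r1_s2])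
qed

lemma homog3_factors:
  "homog3 (- S) 1" "homog3 quad1 2" "homog3 quad2 2" "homog3 quartic 4"
  unfolding quad1_def quad2_def quartic_def
  by (intro homog_poly3_imp_homog3, (rule homog3.homog_intros homog_poly3_variables refl | simp)+)+

section \<open>Birationality\<close>

lemma birational_onto_hypersurfaceI:
  assumes "homog3 F0 d" "homog3 F1 d" "homog3 F2 d" "homog3 F3 d" and "F0 \<noteq> 0"
    and "ev4 c3 \<Phi> F0 F1 F2 F3 = 0"
    and "homog4 G0 e" "homog4 G1 e" "homog4 G2 e" and "\<not> \<Phi> dvd G0"
    and "h \<noteq> 0" and "ev4 c3 G0 F0 F1 F2 F3 = h * R" "ev4 c3 G1 F0 F1 F2 F3 = h * S"
      "ev4 c3 G2 F0 F1 F2 F3 = h * T"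
    and "\<not> \<Phi> dvd k"
      "ev3 c4 F0 G0 G1 G2 - k * Wv = \<Phi> * q0" "ev3 c4 F1 G0 G1 G2 - k * Xv = \<Phi> * q1"
      "ev3 c4 F2 G0 G1 G2 - k * Yv = \<Phi> * q2" "ev3 c4 F3 G0 G1 G2 - k * Zv = \<Phi> * q3"
  shows "birational_onto_hypersurface F0 F1 F2 F3 \<Phi>"
  unfolding birational_onto_hypersurface_def using assms by (blast intro: dvdI)

lemma homog3_parametrization: "homog3 pw 3" "homog3 px 3" "homog3 py 3" "homog3 pz 3"
  unfolding pw_def px_def py_def pz_def
  by (intro homog_poly3_imp_homog3, (rule homog3.homog_intros homog_poly3_variables refl | simp)+)+

lemma parametrization_on_S1: "ev4 c3 S1 pw px py pz = 0"
  unfolding S1_def ev4_simps[OF comm_ring_hom_c3]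
  unfolding pw_def px_def py_def pz_def by algebra

text \<open>The inverse map \<open>S1 \<dashrightarrow> P^2\<close> is \<open>(inv_r : inv_s : inv_t)\<close>.\<close>

definition inv_r :: qpoly4 where
  "inv_r = Zv^2 - Zv*Xv + Zv*Wv - Yv*Wv - Xv*Wv + Wv^2"

definition inv_s :: qpoly4 where
  "inv_s = Zv^2 + Zv*Wv - Yv^2 - Yv*Xv - Xv^2 + Wv^2"

definition inv_t :: qpoly4 where
  "inv_t = - (Zv*Yv) + Xv*Wv"

definition h_scalar :: qpoly3 where
  "h_scalar = 3*T^5 - 6*T^4*S + 12*T^4*R + 12*T^3*S^2 - 21*T^3*S*R + 21*T^3*R^2 - 12*T^2*S^3 +
     36*T^2*S^2*R - 36*T^2*S*R^2 + 24*T^2*R^3 + 6*T*S^4 - 21*T*S^3*R + 36*T*S^2*R^2 -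
     30*T*S*R^3 + 15*T*R^4 - 3*S^5 + 12*S^4*R - 21*S^3*R^2 + 24*S^2*R^3 - 15*S*R^4 + 6*R^5"

definition k_scalar :: qpoly4 where
  "k_scalar = - (Zv^5) + Zv^4*Yv + 2*Zv^4*Xv - 3*Zv^4*Wv - Zv^3*Yv^2 - Zv^3*Yv*Xv +
     4*Zv^3*Yv*Wv - Zv^3*Xv^2 + 5*Zv^3*Xv*Wv - 6*Zv^3*Wv^2 + 2*Zv^2*Yv^3 + 3*Zv^2*Yv^2*Xv -
     3*Zv^2*Yv^2*Wv + 3*Zv^2*Yv*Xv^2 - 3*Zv^2*Yv*Xv*Wv + 9*Zv^2*Yv*Wv^2 + Zv^2*Xv^3 -
     3*Zv^2*Xv^2*Wv + 9*Zv^2*Xv*Wv^2 - 8*Zv^2*Wv^3 - 2*Zv*Yv^4 - 7*Zv*Yv^3*Xv + 3*Zv*Yv^3*Wv -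
     9*Zv*Yv^2*Xv^2 + 3*Zv*Yv^2*Xv*Wv - 3*Zv*Yv^2*Wv^2 - 7*Zv*Yv*Xv^3 + 3*Zv*Yv*Xv^2*Wv -
     3*Zv*Yv*Xv*Wv^2 + 8*Zv*Yv*Wv^3 - 2*Zv*Xv^4 - 3*Zv*Xv^2*Wv^2 + 7*Zv*Xv*Wv^3 - 6*Zv*Wv^4 +
     2*Yv^5 + 5*Yv^4*Xv - 5*Yv^4*Wv + 8*Yv^3*Xv^2 - 10*Yv^3*Xv*Wv + 3*Yv^3*Wv^2 +
     7*Yv^2*Xv^3 - 9*Yv^2*Xv^2*Wv + 3*Yv^2*Xv*Wv^2 - 2*Yv^2*Wv^3 + 4*Yv*Xv^4 - 4*Yv*Xv^3*Wv +
     3*Yv*Xv^2*Wv^2 - 2*Yv*Xv*Wv^3 + 5*Yv*Wv^4 + Xv^5 + Xv^4*Wv - 2*Xv^2*Wv^3 + 4*Xv*Wv^4 -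
     3*Wv^5"

definition quot_w :: qpoly4 where
  "quot_w = Zv^3 - Zv^2*Yv - 2*Zv^2*Xv + 2*Zv^2*Wv + Zv*Yv^2 + Zv*Yv*Xv - 3*Zv*Yv*Wv +
     Zv*Xv^2 - 3*Zv*Xv*Wv + 3*Zv*Wv^2 + Yv^2*Wv + Yv*Xv*Wv - 3*Yv*Wv^2 + Xv^2*Wv - 3*Xv*Wv^2 +
     2*Wv^3"

definition quot_x :: qpoly4 where
  "quot_x = - (Zv^2*Yv) + Zv*Yv^2 + 2*Zv*Yv*Xv - Zv*Yv*Wv + Zv*Xv*Wv - Yv^3 - Yv^2*Xv +
     2*Yv^2*Wv - Yv*Xv^2 - Yv*Wv^2 - 2*Xv^2*Wv + Xv*Wv^2"

definition quot_y :: qpoly4 where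
  "quot_y = Zv^2*Yv + Zv^2*Xv - Zv*Yv^2 - 3*Zv*Yv*Xv + 2*Zv*Yv*Wv - 2*Zv*Xv^2 + Zv*Xv*Wv +
     Yv^3 + 2*Yv^2*Xv - 3*Yv^2*Wv + 2*Yv*Xv^2 - 5*Yv*Xv*Wv + 2*Yv*Wv^2 + Xv^3 - Xv^2*Wv +
     Xv*Wv^2"

definition quot_z :: qpoly4 where
  "quot_z = - (Yv^2*Wv) - Yv*Xv*Wv + 2*Yv*Wv^2 - Xv^2*Wv + Xv*Wv^2 - Wv^3"

lemma homog4_inverse: "homog4 inv_r 2" "homog4 inv_s 2" "homog4 inv_t 2"
  unfolding inv_r_def inv_s_def inv_t_def
  by (intro homog_poly4_imp_homog4, (rule homog4.homog_intros homog_poly4_variables refl | simp)+)+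

lemma inverse_after_parametrization:
  "ev4 c3 inv_r pw px py pz = h_scalar * R"
  "ev4 c3 inv_s pw px py pz = h_scalar * S"
  "ev4 c3 inv_t pw px py pz = h_scalar * T"
  unfolding inv_r_def inv_s_def inv_t_def ev4_simps[OF comm_ring_hom_c3]
  unfolding pw_def px_def py_def pz_def h_scalar_def by algebra+

lemma parametrization_after_inverse:
  "ev3 c4 pw inv_r inv_s inv_t - k_scalar * Wv = S1 * quot_w"
  "ev3 c4 px inv_r inv_s inv_t - k_scalar * Xv = S1 * quot_x"
  "ev3 c4 py inv_r inv_s inv_t - k_scalar * Yv = S1 * quot_y"
  "ev3 c4 pz inv_r inv_s inv_t - k_scalar * Zv = S1 * quot_z"
  unfolding pw_def px_def py_def pz_def ev3_simps[OF comm_ring_hom_c4]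
  unfolding inv_r_def inv_s_def inv_t_def k_scalar_def quot_w_def quot_x_def quot_y_def
    quot_z_def S1_def
  by algebra+

lemma S1_dvd_imp_vanishes_at_1001:
  assumes "S1 dvd p"
  shows "ev4 (\<lambda>x. x) p 1 0 0 1 = (0 :: rat)"
proof -
  from assms obtain q where "p = S1 * q"
    by (elim dvdE)
  moreover have "ev4 (\<lambda>x. x) S1 1 0 0 1 = (0 :: rat)"
    unfolding S1_def ev4_simps[OF comm_ring_hom_id] by simp
  ultimately show ?thesis
    by (simp add: ev4_simps[OF comm_ring_hom_id])
qed

lemma not_S1_dvd: "\<not> S1 dvd inv_r" "\<not> S1 dvd k_scalar"
proof -
  have "ev4 (\<lambda>x. x) inv_r 1 0 0 1 = (3 :: rat)" "ev4 (\<lambda>x. x) k_scalar 1 0 0 1 = (- 27 :: rat)"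
    unfolding inv_r_def k_scalar_def ev4_simps[OF comm_ring_hom_id] by simp_all
  then show "\<not> S1 dvd inv_r" "\<not> S1 dvd k_scalar"
    by (auto dest: S1_dvd_imp_vanishes_at_1001)
qed

lemma pw_h_scalar_nonzero: "pw \<noteq> 0" "h_scalar \<noteq> 0"
proof -
  have "ev3 (\<lambda>x. x) pw 1 0 0 = (- 1 :: rat)" "ev3 (\<lambda>x. x) h_scalar 1 0 0 = (6 :: rat)"
    unfolding pw_def h_scalar_def ev3_simps[OF comm_ring_hom_id] by simp_all
  then show "pw \<noteq> 0" "h_scalar \<noteq> 0"
    by (auto simp: comm_ring_hom.hom_zero[OF comm_ring_hom_ev3[OF comm_ring_hom_id]])
qed

theorem mainTheorem19:
  shows "birational_onto_hypersurface pw px py pz S1 \<and>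
         (\<exists>l q1 q2 f :: qpoly3.
            pw^3 + px^3 = l * q1 * q2 * f \<and>
            irreducible l \<and> irreducible q1 \<and> irreducible q2 \<and> irreducible f \<and>
            homog3 l 1 \<and> homog3 q1 2 \<and> homog3 q2 2 \<and> homog3 f 4)"
proof -
  have "birational_onto_hypersurface pw px py pz S1"
    by (rule birational_onto_hypersurfaceI[OF homog3_parametrization pw_h_scalar_nonzero(1)
          parametrization_on_S1 homog4_inverse not_S1_dvd(1) pw_h_scalar_nonzero(2)
          inverse_after_parametrization not_S1_dvd(2) parametrization_after_inverse])
  then show ?thesis
    using pw_cube_plus_px_cube_factorization irreducible_factors homog3_factors by blast
qed

end
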